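(* Consider an open quantum system on a finite-dimensional Hilbert space $\mathcal H$ with Hamiltonian $H$ and coupling operators $L_1,\dots,L_K$, and let $V$ be a Lyapunov operator of the system (commuting with $H$). Suppose that either (Condition ES) there is $c>0$ with $\mathcal G(V)\le -cV$, or (Condition DS) $\mathcal G(V)\le0$ and there is $c>0$ with $cV\le\mathfrak D(V)$. Then for every initial density state the state trajectory $\rho_t$ converges to $Z_V$, i.e. every limit point of $\rho_t$ as $t\to\infty$ lies in $Z_V$.
   Context: The density state (positive semidefinite, trace one) evolves by $\dot\rho_t=-i[H,\rho_t]+\sum_{k=1}^K\big(L_k\rho_tL_k^\dagger-\tfrac12L_k^\dagger L_k\rho_t-\tfrac12\rho_tL_k^\dagger L_k\big)$. Standing assumption: the observables considered commute with $H$; for such $X$ the generator is $\mathcal G(X)=\sum_{k=1}^K\big(L_k^\dagger XL_k-\tfrac12L_k^\dagger L_kX-\tfrac12XL_k^\dagger L_k\big)$ and $\frac{d}{dt}\operatorname{tr}(X\rho_t)=\operatorname{tr}(\mathcal G(X)\rho_t)$. A Lyapunov operator is a self-adjoint $V\ge0$ whose smallest eigenvalue is $0$ and with $\mathcal G(V)\le0$. The dissipation functional is $\mathfrak D(X)=\mathcal G(X^\dagger X)-\mathcal G(X^\dagger)X-X^\dagger\mathcal G(X)$; for self-adjoint $V$ this equals $\sum_k[L_k^\dagger,V][V,L_k]$. $Z_V=\{\rho \text{ density state}:\operatorname{tr}(V\rho)=0\}$; convergence of states means convergence of $\operatorname{tr}(\rho Y)$ for all operators $Y$. *)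

theory Defs
  imports "HOL-Analysis.Analysis"
begin

type_synonym 'n op = "complex^'n^'n"

definition adj :: "'n::finite op \<Rightarrow> 'n op" where
  "adj A = (\<chi> i j. cnj (A $ j $ i))"

definition cscale :: "complex \<Rightarrow> 'n::finite op \<Rightarrow> 'n op" where
  "cscale a A = (\<chi> i j. a * A $ i $ j)"

definition cinner :: "complex^'n::finite \<Rightarrow> complex^'n \<Rightarrow> complex" where
  "cinner x y = (\<Sum>i\<in>UNIV. cnj (x $ i) * y $ i)"

definition self_adjoint :: "'n::finite op \<Rightarrow> bool" where
  "self_adjoint A \<longleftrightarrow> adj A = A"

definition psd :: "'n::finite op \<Rightarrow> bool" where
  "psd A \<longleftrightarrow> self_adjoint A \<and> (\<forall>x. Im (cinner x (A *v x)) = 0 \<and> 0 \<le> Re (cinner x (A *v x)))"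

definition loewner_le :: "'n::finite op \<Rightarrow> 'n op \<Rightarrow> bool" where
  "loewner_le A B \<longleftrightarrow> psd (B - A)"

definition density_state :: "'n::finite op \<Rightarrow> bool" where
  "density_state \<rho> \<longleftrightarrow> psd \<rho> \<and> trace \<rho> = 1"

definition lindblad :: "'n::finite op \<Rightarrow> (nat \<Rightarrow> 'n op) \<Rightarrow> nat \<Rightarrow> 'n op \<Rightarrow> 'n op" where
  "lindblad H L K \<rho> = cscale (- \<i>) (H ** \<rho> - \<rho> ** H)
     + (\<Sum>k\<in>{1..K}. L k ** \<rho> ** adj (L k)
          - (1/2::real) *\<^sub>R (adj (L k) ** L k ** \<rho>)
          - (1/2::real) *\<^sub>R (\<rho> ** adj (L k) ** L k))"

text \<open>Generator (Heisenberg picture) for observables commuting with \<open>H\<close>.\<close>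
definition gen :: "(nat \<Rightarrow> 'n::finite op) \<Rightarrow> nat \<Rightarrow> 'n op \<Rightarrow> 'n op" where
  "gen L K X = (\<Sum>k\<in>{1..K}. adj (L k) ** X ** L k
          - (1/2::real) *\<^sub>R (adj (L k) ** L k ** X)
          - (1/2::real) *\<^sub>R (X ** adj (L k) ** L k))"

definition dissip :: "(nat \<Rightarrow> 'n::finite op) \<Rightarrow> nat \<Rightarrow> 'n op \<Rightarrow> 'n op" where
  "dissip L K X = gen L K (adj X ** X) - gen L K (adj X) ** X - adj X ** gen L K X"

text \<open>Lyapunov operator: self-adjoint, \<open>V \<ge> 0\<close>, smallest eigenvalue \<open>0\<close>
  (i.e. \<open>0\<close> is an eigenvalue), and \<open>\<G>(V) \<le> 0\<close>.\<close>
definition lyapunov_op :: "(nat \<Rightarrow> 'n::finite op) \<Rightarrow> nat \<Rightarrow> 'n op \<Rightarrow> bool" where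
  "lyapunov_op L K V \<longleftrightarrow> self_adjoint V \<and> psd V \<and> (\<exists>x. x \<noteq> 0 \<and> V *v x = 0)
     \<and> loewner_le (gen L K V) 0"

definition Z_set :: "'n::finite op \<Rightarrow> 'n op set" where
  "Z_set V = {\<rho>. density_state \<rho> \<and> trace (V ** \<rho>) = 0}"

definition state_conv :: "(nat \<Rightarrow> 'n::finite op) \<Rightarrow> 'n op \<Rightarrow> bool" where
  "state_conv r \<sigma> \<longleftrightarrow> (\<forall>Y. (\<lambda>m. trace (r m ** Y)) \<longlonglongrightarrow> trace (\<sigma> ** Y))"

end

theory Submission
  imports Defs
begin

text \<open>The Lindblad flow preserves the trace, self-adjointness and (by a Nagumo-type first-contact
  argument) positivity, so \<open>\<rho>\<^sub>t\<close> stays a density state. Since \<open>V\<close> commutes with \<open>H\<close>, the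
  function \<open>f(t) = tr(V\<rho>\<^sub>t) \<ge> 0\<close> has derivative \<open>tr(\<G>(V)\<rho>\<^sub>t) \<le> 0\<close>, so it decreases to a limit
  \<open>\<delta> \<ge> 0\<close>. If \<open>\<delta> > 0\<close>, then under ES \<open>f' \<le> -c\<delta>\<close>, and under DS the identity
  \<open>\<G>(V\<^sup>2) = \<DD>(V) + \<G>(V)V + V\<G>(V)\<close> shows that \<open>A f - tr(V\<^sup>2\<rho>\<^sub>t)\<close> decreases at rate at least
  \<open>c\<delta>/2\<close> for suitable \<open>A\<close>; both contradict boundedness. Hence \<open>tr(V\<rho>\<^sub>t) \<rightarrow> 0\<close>, and every limit
  point \<open>\<sigma>\<close> of the trajectory is a density state with \<open>tr(V\<sigma>) = 0\<close>.\<close>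

section \<open>Matrix algebra\<close>

lemma adj_entry [simp]: "adj A $ i $ j = cnj (A $ j $ i)"
  by (simp add: adj_def)

lemma cscale_entry [simp]: "cscale a A $ i $ j = a * A $ i $ j"
  by (simp add: cscale_def)

lemma adj_adj [simp]: "adj (adj A) = A"
  by (simp add: vec_eq_iff)

lemma adj_zero [simp]: "adj 0 = 0"
  by (simp add: vec_eq_iff)

lemma adj_mat1 [simp]: "adj (mat 1 :: 'n::finite op) = mat 1"
  by (simp add: vec_eq_iff mat_def)

lemma adj_matrix_mult: "adj (A ** B) = adj B ** adj A"
  by (simp add: vec_eq_iff matrix_matrix_mult_def mult.commute)

lemma adj_add: "adj (A + B) = adj A + adj B"
  by (simp add: vec_eq_iff)

lemma adj_diff: "adj (A - B) = adj A - adj B"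
  by (simp add: vec_eq_iff)

lemma adj_scaleR: "adj (r *\<^sub>R A) = r *\<^sub>R adj A"
  by (simp add: vec_eq_iff)

lemma adj_cscale: "adj (cscale a A) = cscale (cnj a) (adj A)"
  by (simp add: vec_eq_iff)

lemma adj_sum: "adj (sum f S) = (\<Sum>k\<in>S. adj (f k))"
  by (induction S rule: infinite_finite_induct) (auto simp: adj_add)

lemma bounded_linear_adj: "bounded_linear (adj :: 'n::finite op \<Rightarrow> 'n op)"
  using linear_conv_bounded_linear linearI[of adj] adj_add adj_scaleR by blast

lemma self_adjoint_entry: "self_adjoint A \<Longrightarrow> cnj (A $ j $ i) = A $ i $ j"
  by (metis adj_entry self_adjoint_def)

lemma matrix_mult_scaleR_right: "A ** (r *\<^sub>R B) = r *\<^sub>R ((A::'n::finite op) ** B)"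
  by (simp add: matrix_scalar_ac scalar_matrix_assoc)

lemma matrix_mult_cscale_right: "A ** cscale a B = cscale a ((A::'n::finite op) ** B)"
  by (simp add: vec_eq_iff matrix_matrix_mult_def sum_distrib_left mult_ac)

lemma matrix_add_rdistrib: "(A + B) ** C = A ** C + B ** (C::'n::finite op)"
  by (simp add: vec_eq_iff matrix_matrix_mult_def distrib_right sum.distrib)

lemma matrix_diff_rdistrib: "(A - B) ** C = A ** C - B ** (C::'n::finite op)"
  by (simp add: vec_eq_iff matrix_matrix_mult_def left_diff_distrib sum_subtractf)

lemma matrix_diff_ldistrib: "C ** (A - B) = C ** A - C ** (B::'n::finite op)"
  by (simp add: vec_eq_iff matrix_matrix_mult_def right_diff_distrib sum_subtractf)

lemma matrix_neg_left: "(- A) ** B = - ((A::'n::finite op) ** B)"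
  by (simp add: vec_eq_iff matrix_matrix_mult_def sum_negf)

lemma matrix_neg_right: "A ** (- B) = - ((A::'n::finite op) ** B)"
  by (simp add: vec_eq_iff matrix_matrix_mult_def sum_negf)

lemma matrix_sum_left: "sum f S ** B = (\<Sum>k\<in>S. f k ** (B::'n::finite op))"
  by (induction S rule: infinite_finite_induct) (auto simp: matrix_add_rdistrib)

lemma matrix_sum_right: "B ** sum f S = (\<Sum>k\<in>S. (B::'n::finite op) ** f k)"
  by (induction S rule: infinite_finite_induct) (auto simp: matrix_add_ldistrib)

lemma matrix_vector_sum: "sum f S *v x = (\<Sum>k\<in>S. f k *v (x::complex^'n::finite))"
  by (induction S rule: infinite_finite_induct) (auto simp: matrix_vector_mult_add_rdistrib)

lemma matrix_vector_scaleR: "(r *\<^sub>R A) *v x = of_real r *s ((A::'n::finite op) *v x)"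
  by (simp add: vec_eq_iff matrix_vector_mult_def sum_distrib_left mult_ac scaleR_conv_of_real[where 'a=complex])

lemma matrix_vector_cscale: "cscale a A *v x = a *s ((A::'n::finite op) *v x)"
  by (simp add: vec_eq_iff matrix_vector_mult_def sum_distrib_left mult_ac)

lemma matrix_vector_smult: "(A::'n::finite op) *v (w *s x) = w *s (A *v x)"
  by (simp add: vec_eq_iff matrix_vector_mult_def sum_distrib_left mult_ac)

lemma cscale_add: "cscale a (A + B) = cscale a A + cscale a B"
  by (simp add: vec_eq_iff distrib_left)

lemma cscale_diff: "cscale a (A - B) = cscale a A - cscale a B"
  by (simp add: vec_eq_iff right_diff_distrib)

lemma cscale_scaleR: "cscale a (r *\<^sub>R A) = r *\<^sub>R cscale a A"
  by (simp add: vec_eq_iff mult_ac)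

lemma trace_zero [simp]: "trace (0::'n::finite op) = 0"
  by (simp add: trace_def)

lemma trace_sum: "trace (sum f S) = (\<Sum>k\<in>S. trace (f k))"
  by (simp add: trace_def sum_component sum.swap[of _ S])

lemma trace_scaleR: "trace (r *\<^sub>R (A::'n::finite op)) = of_real r * trace A"
  by (simp add: trace_def sum_distrib_left scaleR_conv_of_real[where 'a=complex])

lemma trace_cscale: "trace (cscale a A) = a * trace A"
  by (simp add: trace_def sum_distrib_left)

lemma trace_neg: "trace (- (A::'n::finite op)) = - trace A"
  by (simp add: trace_def sum_negf)

lemma trace_mult_cycle: "trace (A ** B ** C) = trace (C ** A ** (B::'n::finite op))"
  by (simp add: trace_mul_sym[of "A ** B" C] matrix_mul_assoc)

lemma bounded_linear_trace: "bounded_linear (trace :: 'n::finite op \<Rightarrow> complex)"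
proof -
  have "linear (trace :: 'n::finite op \<Rightarrow> complex)"
    by (rule linearI) (simp_all add: trace_add trace_scaleR scaleR_conv_of_real[where 'a=complex])
  thus ?thesis by (simp add: linear_conv_bounded_linear)
qed

lemma bounded_linear_Re_trace_mult: "bounded_linear (\<lambda>M::'n::finite op. Re (trace (X ** M)))"
proof -
  have "linear (\<lambda>M::'n::finite op. Re (trace (X ** M)))"
    by (rule linearI) (simp_all add: matrix_add_ldistrib trace_add matrix_mult_scaleR_right trace_scaleR)
  thus ?thesis by (simp add: linear_conv_bounded_linear)
qed

lemma trace_mult_matrix_unit:
  "trace (A ** (\<chi> a b. if a = j \<and> b = i then 1 else 0)) = (A::'n::finite op) $ i $ j"
proof -
  have "trace (A ** (\<chi> a b. if a = j \<and> b = i then 1 else 0)) = (\<Sum>a\<in>UNIV. if a = i then A $ a $ j else 0)"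
    unfolding trace_def matrix_matrix_mult_def by (rule sum.cong) (auto simp: if_distrib cong: if_cong)
  thus ?thesis by simp
qed

lemma cinner_adj: "cinner x (A *v y) = cinner (adj A *v x) y"
proof -
  have "cinner x (A *v y) = (\<Sum>i\<in>UNIV. \<Sum>j\<in>UNIV. cnj (x$i) * A$i$j * y$j)"
    by (simp add: cinner_def matrix_vector_mult_def sum_distrib_left mult.assoc)
  also have "\<dots> = (\<Sum>j\<in>UNIV. \<Sum>i\<in>UNIV. cnj (x$i) * A$i$j * y$j)"
    by (rule sum.swap)
  also have "\<dots> = cinner (adj A *v x) y"
    by (simp add: cinner_def matrix_vector_mult_def sum_distrib_right sum_distrib_left mult_ac)
  finally show ?thesis .
qed

lemma cnj_cinner: "cnj (cinner x y) = cinner y x"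
  by (simp add: cinner_def mult.commute)

lemma cinner_self: "cinner x x = of_real ((norm x)\<^sup>2)"
proof -
  have "(norm x)\<^sup>2 = (\<Sum>i\<in>UNIV. (cmod (x $ i))\<^sup>2)"
    unfolding norm_vec_def L2_set_def by (rule real_sqrt_pow2, rule sum_nonneg, simp)
  moreover have "cnj (x $ i) * x $ i = of_real ((cmod (x $ i))\<^sup>2)" for i
    by (metis complex_norm_square mult.commute)
  ultimately show ?thesis
    unfolding cinner_def by (simp add: of_real_sum)
qed

lemma cinner_zero_right [simp]: "cinner x 0 = 0"
  by (simp add: cinner_def)

lemma cinner_zero_left [simp]: "cinner 0 x = 0"
  by (simp add: cinner_def)

lemma cinner_add_left: "cinner (x + y) z = cinner x z + cinner y z"
  by (simp add: cinner_def distrib_right sum.distrib)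

lemma cinner_add_right: "cinner x (y + z) = cinner x y + cinner x z"
  by (simp add: cinner_def distrib_left sum.distrib)

lemma cinner_diff_right: "cinner x (y - z) = cinner x y - cinner x z"
  by (simp add: cinner_def right_diff_distrib sum_subtractf)

lemma cinner_sum_right: "cinner x (sum f S) = (\<Sum>k\<in>S. cinner x (f k))"
  by (simp add: cinner_def sum_distrib_left sum.swap[of _ S])

lemma cinner_smult_left: "cinner (w *s x) y = cnj w * cinner x y"
  by (simp add: cinner_def sum_distrib_left mult_ac)

lemma cinner_smult_right: "cinner x (w *s y) = w * cinner x y"
  by (simp add: cinner_def sum_distrib_left mult_ac)

lemma cinner_expand: "cinner x ((M::'n::finite op) *v x) = (\<Sum>i\<in>UNIV. \<Sum>j\<in>UNIV. cnj (x$i) * M$i$j * x$j)"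
  by (simp add: cinner_def matrix_vector_mult_def sum_distrib_left mult.assoc)

lemma cinner_axis_mult_axis: "cinner (axis i 1) ((A::'n::finite op) *v axis j 1) = A $ i $ j"
  by (simp add: cinner_def matrix_vector_mult_def axis_def if_distrib if_distribR cong: if_cong)

lemma self_adjoint_cinner: "self_adjoint A \<Longrightarrow> cinner x (A *v y) = cnj (cinner y (A *v x))"
  by (metis cinner_adj cnj_cinner self_adjoint_def)

lemma self_adjoint_quadratic_real: "self_adjoint A \<Longrightarrow> Im (cinner x (A *v x)) = 0"
  using self_adjoint_cinner[of A x x] by (metis cnj.sel(2) neg_equal_zero)

lemma quadratic_scaleR:
  "cinner (r *\<^sub>R x) (A *v (r *\<^sub>R x)) = of_real (r\<^sup>2) * cinner x ((A::'n::finite op) *v x)"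
proof -
  have "r *\<^sub>R x = of_real r *s x" for x :: "complex^'n"
    by (simp add: vec_eq_iff scaleR_conv_of_real[where 'a=complex])
  thus ?thesis
    by (simp add: matrix_vector_smult cinner_smult_left cinner_smult_right power2_eq_square)
qed

section \<open>Positive semidefinite operators\<close>

lemma psd_self_adjoint: "psd A \<Longrightarrow> self_adjoint A"
  by (simp add: psd_def)

lemma psd_quadratic_nonneg: "psd A \<Longrightarrow> 0 \<le> Re (cinner x (A *v x))"
  by (simp add: psd_def)

lemma psdI:
  assumes "self_adjoint A" and "\<And>x. 0 \<le> Re (cinner x (A *v x))"
  shows "psd A"
  using assms by (simp add: psd_def self_adjoint_quadratic_real)

lemma quadratic_nonneg_of_sphere:
  assumes "\<And>x. norm x = 1 \<Longrightarrow> 0 \<le> Re (cinner x ((A::'n::finite op) *v x))"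
  shows "0 \<le> Re (cinner y (A *v y))"
proof (cases "y = 0")
  case False
  have "0 \<le> Re (cinner ((1 / norm y) *\<^sub>R y) (A *v ((1 / norm y) *\<^sub>R y)))"
    using False by (intro assms) simp
  thus ?thesis
    using False by (simp add: quadratic_scaleR power_divide zero_le_divide_iff)
qed simp

lemma quadratic_nonneg_imp_le_mult:
  fixes a b m :: real
  assumes "0 \<le> a" "0 \<le> b" "0 \<le> m" and nonneg: "\<And>t. 0 \<le> a - 2*t*m + t\<^sup>2*m*b"
  shows "m \<le> a * b"
proof (cases "b > 0")
  case True
  have "0 \<le> a - 2*(1/b)*m + (1/b)\<^sup>2*m*b" by (rule nonneg)
  hence "0 \<le> a - m/b" using True by (simp add: power2_eq_square field_simps)
  thus ?thesis using True by (simp add: field_simps)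
next
  case False
  with assms have "b = 0" by simp
  show ?thesis
  proof (rule ccontr)
    assume "\<not> m \<le> a * b"
    hence "m > 0" using \<open>b = 0\<close> by simp
    have "0 \<le> a - 2*((a+1)/(2*m))*m + ((a+1)/(2*m))\<^sup>2*m*b" by (rule nonneg)
    thus False using \<open>m > 0\<close> \<open>b = 0\<close> by (simp add: field_simps)
  qed
qed

lemma psd_cauchy_schwarz:
  assumes "psd A"
  shows "(cmod (cinner x (A *v y)))\<^sup>2 \<le> Re (cinner x (A *v x)) * Re (cinner y (A *v y))"
proof -
  define z where "z = cinner x (A *v y)"
  have zy: "cinner y (A *v x) = cnj z"
    using self_adjoint_cinner[OF psd_self_adjoint[OF assms], of y x] by (simp add: z_def)
  have "0 \<le> Re (cinner x (A *v x)) - 2*t*(cmod z)\<^sup>2 + t\<^sup>2*(cmod z)\<^sup>2 * Re (cinner y (A *v y))" for t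
  proof -
    define w where "w = - (of_real t * cnj z)"
    have zz: "z * cnj z = of_real ((cmod z)\<^sup>2)"
      by (rule complex_norm_square[symmetric])
    have wz: "w * z = - of_real (t * (cmod z)\<^sup>2)" and "cnj w * cnj z = - of_real (t * (cmod z)\<^sup>2)"
      and ww: "cnj w * w = of_real (t\<^sup>2 * (cmod z)\<^sup>2)"
      by (simp_all add: w_def zz power2_eq_square flip: mult.assoc) (simp_all add: mult_ac zz power2_eq_square)
    have "cinner (x + w *s y) (A *v (x + w *s y)) = cinner x (A *v x) + w * z + cnj w * cnj z
        + cnj w * w * cinner y (A *v y)"
      by (simp add: matrix_vector_right_distrib matrix_vector_smult cinner_add_left cinner_add_right
          cinner_smult_left cinner_smult_right zy z_def[symmetric] algebra_simps)
    moreover have "0 \<le> Re (cinner (x + w *s y) (A *v (x + w *s y)))"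
      by (rule psd_quadratic_nonneg[OF assms])
    ultimately show ?thesis
      using wz ww \<open>cnj w * cnj z = _\<close> by (simp add: power2_eq_square)
  qed
  then show ?thesis
    unfolding z_def[symmetric]
    by (intro quadratic_nonneg_imp_le_mult psd_quadratic_nonneg[OF assms]) simp_all
qed

lemma psd_quadratic_zero_imp_kernel:
  assumes "psd A" "Re (cinner x (A *v x)) = 0"
  shows "A *v x = 0"
proof -
  have "(cmod (cinner (A *v x) (A *v x)))\<^sup>2 \<le> Re (cinner (A *v x) (A *v (A *v x))) * Re (cinner x (A *v x))"
    by (rule psd_cauchy_schwarz[OF assms(1)])
  hence "(norm (A *v x))^4 \<le> 0"
    using assms(2) by (simp add: cinner_self norm_power)
  thus ?thesis by simp
qed

lemma psd_entry_cauchy_schwarz: "psd A \<Longrightarrow> (cmod (A $ i $ j))\<^sup>2 \<le> Re (A $ i $ i) * Re (A $ j $ j)"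
  using psd_cauchy_schwarz[of A "axis i 1" "axis j 1"] by (simp add: cinner_axis_mult_axis)

lemma psd_diagonal_real: "psd A \<Longrightarrow> A $ i $ i = of_real (Re (A $ i $ i))"
  using self_adjoint_quadratic_real[OF psd_self_adjoint, of A "axis i 1"]
  by (simp add: cinner_axis_mult_axis complex_eq_iff)

lemma psd_diagonal_nonneg: "psd A \<Longrightarrow> 0 \<le> Re (A $ i $ i)"
  using psd_quadratic_nonneg[of A "axis i 1"] by (simp add: cinner_axis_mult_axis)

lemma psd_diagonal_zero_imp_entry_zero:
  assumes "psd A" "A $ i $ i = 0"
  shows "A $ i $ j = 0"
  using psd_entry_cauchy_schwarz[OF assms(1), of i j] assms(2) by simp

definition outer :: "complex^'n::finite \<Rightarrow> 'n op" where
  "outer v = (\<chi> i j. v $ i * cnj (v $ j))"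

lemma outer_entry [simp]: "outer v $ i $ j = v $ i * cnj (v $ j)"
  by (simp add: outer_def)

lemma adj_outer: "adj (outer w) = outer w"
  by (simp add: vec_eq_iff mult.commute)

lemma outer_mult_vector: "outer w *v y = cinner w y *s w"
  by (simp add: vec_eq_iff matrix_vector_mult_def cinner_def sum_distrib_left mult_ac)

lemma trace_mult_outer: "trace (X ** outer v) = cinner v (X *v v)"
  by (simp add: trace_def cinner_def matrix_matrix_mult_def matrix_vector_mult_def
      sum_distrib_left mult_ac)

lemma trace_outer_mult: "trace (outer v ** X) = cinner v (X *v v)"
  by (subst trace_mul_sym) (rule trace_mult_outer)

text \<open>One step of a Cholesky factorisation: with \<open>w\<close> the \<open>i\<close>-th column of \<open>A\<close> divided by
  \<open>\<surd>A\<^sub>i\<^sub>i\<close>, the Cauchy-Schwarz inequality for \<open>A\<close> keeps \<open>A - w w\<^sup>\<dagger>\<close> positive.\<close>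
lemma quadratic_diff_outer_column_nonneg:
  assumes psd: "psd A" and "0 < d" and Aii: "A $ i $ i = of_real d"
  shows "0 \<le> Re (cinner y ((A - outer (\<chi> k. A $ k $ i / of_real (sqrt d))) *v y))"
proof -
  define w where "w = (\<chi> k. A $ k $ i / of_real (sqrt d))"
  have "cinner w y = cinner (axis i 1) (A *v y) / of_real (sqrt d)"
    by (simp add: cinner_def w_def matrix_vector_mult_def axis_def sum_divide_distrib
        self_adjoint_entry[OF psd_self_adjoint[OF psd]] if_distrib if_distribR cong: if_cong)
  hence "(cmod (cinner w y))\<^sup>2 = (cmod (cinner (axis i 1) (A *v y)))\<^sup>2 / d"
    using \<open>0 < d\<close> by (simp add: norm_divide power_divide)
  also have "\<dots> \<le> Re (cinner y (A *v y))"
    using psd_cauchy_schwarz[OF psd, of "axis i 1" y] \<open>0 < d\<close> Aii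
    by (simp add: cinner_axis_mult_axis field_simps)
  moreover have "Re (cinner y ((A - outer w) *v y)) = Re (cinner y (A *v y)) - (cmod (cinner w y))\<^sup>2"
    by (simp add: matrix_vector_mult_diff_rdistrib cinner_diff_right outer_mult_vector
        cinner_smult_right power2_eq_square flip: cnj_cinner[of w y]) (simp add: cmod_def power2_eq_square)
  ultimately show ?thesis
    by (simp add: w_def)
qed

lemma psd_diff_outer_column:
  assumes psd: "psd A" and nonzero: "A $ i $ i \<noteq> 0"
  obtains w where "psd (A - outer w)"
    and "{j. (A - outer w) $ j $ j \<noteq> 0} \<subseteq> {j. A $ j $ j \<noteq> 0} - {i}"
proof -
  define d where "d = Re (A $ i $ i)"
  have Aii: "A $ i $ i = of_real d"
    unfolding d_def by (rule psd_diagonal_real[OF psd])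
  have d: "0 < d"
  proof -
    have "0 \<le> d" unfolding d_def by (rule psd_diagonal_nonneg[OF psd])
    moreover have "d \<noteq> 0" using nonzero Aii by auto
    ultimately show ?thesis by simp
  qed
  define w where "w = (\<chi> k. A $ k $ i / of_real (sqrt d))"
  have "psd (A - outer w)"
    using psd_self_adjoint[OF psd] quadratic_diff_outer_column_nonneg[OF psd d Aii]
    by (intro psdI) (simp_all add: w_def self_adjoint_def adj_diff adj_outer)
  moreover have "(A - outer w) $ j $ j = A $ j $ j - of_real ((cmod (A $ j $ i))\<^sup>2 / d)" for j
  proof -
    have "of_real (sqrt d) * of_real (sqrt d) = (of_real d :: complex)"
      using d by (simp flip: of_real_mult)
    hence "w $ j * cnj (w $ j) = A $ j $ i * cnj (A $ j $ i) / of_real d"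
      by (simp add: w_def flip: \<open>of_real (sqrt d) * of_real (sqrt d) = _\<close>)
    thus ?thesis
      by (simp add: complex_norm_square[symmetric] del: of_real_power)
  qed
  hence "{j. (A - outer w) $ j $ j \<noteq> 0} \<subseteq> {j. A $ j $ j \<noteq> 0} - {i}"
    using psd_diagonal_zero_imp_entry_zero[OF psd] Aii d by (auto simp: power2_eq_square)
  ultimately show ?thesis
    by (rule that)
qed

lemma psd_eq_sum_outer:
  assumes "psd (A::'n::finite op)"
  shows "\<exists>vs. A = sum_list (map outer vs)"
  using assms
proof (induction "card {i. A $ i $ i \<noteq> 0}" arbitrary: A rule: less_induct)
  case less
  show ?case
  proof (cases "\<exists>i. A $ i $ i \<noteq> 0")
    case False
    hence "A = 0"
      using psd_diagonal_zero_imp_entry_zero[OF less.prems] by (simp add: vec_eq_iff)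
    thus ?thesis by (intro exI[of _ "[]"]) simp
  next
    case True
    then obtain i where "A $ i $ i \<noteq> 0" by blast
    then obtain w where psd: "psd (A - outer w)"
      and sub: "{j. (A - outer w) $ j $ j \<noteq> 0} \<subseteq> {j. A $ j $ j \<noteq> 0} - {i}"
      using psd_diff_outer_column[OF less.prems] by blast
    have "{j. (A - outer w) $ j $ j \<noteq> 0} \<subset> {j. A $ j $ j \<noteq> 0}"
      using sub \<open>A $ i $ i \<noteq> 0\<close> by blast
    hence "card {j. (A - outer w) $ j $ j \<noteq> 0} < card {j. A $ j $ j \<noteq> 0}"
      by (intro psubset_card_mono) simp_all
    then obtain vs where "A - outer w = sum_list (map outer vs)"
      using less.hyps psd by blast
    hence "A = sum_list (map outer (w # vs))"
      by (simp add: algebra_simps)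
    thus ?thesis by blast
  qed
qed

lemma trace_mult_psd_mono:
  assumes "psd R" and le: "\<And>v. Re (cinner v (X *v v)) \<le> Re (cinner v (Y *v v))"
  shows "Re (trace (X ** R)) \<le> Re (trace (Y ** R))"
proof -
  have "Re (trace (X ** sum_list (map outer vs))) \<le> Re (trace (Y ** sum_list (map outer vs)))" for vs
    by (induction vs) (simp_all add: matrix_add_ldistrib trace_add trace_mult_outer add_mono le)
  thus ?thesis
    using psd_eq_sum_outer[OF assms(1)] by blast
qed

lemma trace_mult_psd_real:
  assumes "self_adjoint X" "psd R"
  shows "Im (trace (X ** R)) = 0"
proof -
  have "Im (trace (X ** sum_list (map outer vs))) = 0" for vs
    by (induction vs)
      (simp_all add: matrix_add_ldistrib trace_add trace_mult_outer self_adjoint_quadratic_real[OF assms(1)])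
  thus ?thesis
    using psd_eq_sum_outer[OF assms(2)] by blast
qed

lemma trace_mult_psd_nonneg:
  assumes "psd Q" "psd R"
  shows "0 \<le> Re (trace (Q ** R))"
  using trace_mult_psd_mono[OF assms(2), of 0 Q] psd_quadratic_nonneg[OF assms(1)] by simp

lemma loewner_le_trace_mono:
  assumes "loewner_le A B" "psd R"
  shows "Re (trace (A ** R)) \<le> Re (trace (B ** R))"
  using trace_mult_psd_nonneg[of "B - A" R] assms
  by (simp add: loewner_le_def matrix_diff_rdistrib trace_sub)

definition l1_norm :: "'n::finite op \<Rightarrow> real" where
  "l1_norm M = (\<Sum>i\<in>UNIV. \<Sum>j\<in>UNIV. cmod (M $ i $ j))"

lemma l1_norm_nonneg: "0 \<le> l1_norm M"
  by (simp add: l1_norm_def sum_nonneg)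

lemma l1_norm_uminus: "l1_norm (- M) = l1_norm M"
  by (simp add: l1_norm_def)

lemma quadratic_le_l1_norm: "Re (cinner x (M *v x)) \<le> l1_norm M * (norm x)\<^sup>2"
proof -
  have "Re (cinner x (M *v x)) \<le> (\<Sum>i\<in>UNIV. \<Sum>j\<in>UNIV. cmod (cnj (x$i) * M$i$j * x$j))"
    unfolding cinner_expand
    by (rule order_trans[OF complex_Re_le_cmod], rule order_trans[OF norm_sum], rule sum_mono, rule norm_sum)
  also have "\<dots> \<le> (\<Sum>i\<in>UNIV. \<Sum>j\<in>UNIV. cmod (M$i$j) * (norm x)\<^sup>2)"
  proof (intro sum_mono)
    fix i j
    have "cmod (cnj (x$i) * M$i$j * x$j) = cmod (M$i$j) * (cmod (x$i) * cmod (x$j))"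
      by (simp add: norm_mult)
    also have "\<dots> \<le> cmod (M$i$j) * (norm x * norm x)"
      using Finite_Cartesian_Product.norm_nth_le[of x i] Finite_Cartesian_Product.norm_nth_le[of x j]
      by (intro mult_left_mono mult_mono) auto
    finally show "cmod (cnj (x$i) * M$i$j * x$j) \<le> cmod (M$i$j) * (norm x)\<^sup>2"
      by (simp add: power2_eq_square)
  qed
  also have "\<dots> = l1_norm M * (norm x)\<^sup>2"
    by (simp add: l1_norm_def sum_distrib_right)
  finally show ?thesis .
qed

lemma trace_mult_psd_le_l1_norm:
  assumes "psd R"
  shows "Re (trace (X ** R)) \<le> l1_norm X * Re (trace R)"
  using trace_mult_psd_mono[OF assms, of X "l1_norm X *\<^sub>R mat 1"] quadratic_le_l1_norm[of _ X]
  by (simp add: matrix_vector_scaleR cinner_smult_right cinner_self trace_scaleR flip: scalar_matrix_assoc)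

lemma two_mult_le_amgm:
  fixes a k p q \<epsilon> :: real
  assumes "a\<^sup>2 \<le> k * p * q" "0 \<le> k" "0 \<le> p" "0 \<le> q" "0 < \<epsilon>"
  shows "2 * a \<le> \<epsilon> * q + (k / \<epsilon>) * p"
proof (rule power2_le_imp_le)
  have "(\<epsilon> * q + (k / \<epsilon>) * p)\<^sup>2 = (\<epsilon> * q - (k / \<epsilon>) * p)\<^sup>2 + 4 * (k * p * q)"
    using assms(5) by (simp add: power2_eq_square field_simps)
  moreover have "(2 * a)\<^sup>2 = 4 * a\<^sup>2"
    by (simp add: power_mult_distrib)
  moreover have "0 \<le> (\<epsilon> * q - (k / \<epsilon>) * p)\<^sup>2"
    by simp
  ultimately show "(2 * a)\<^sup>2 \<le> (\<epsilon> * q + (k / \<epsilon>) * p)\<^sup>2"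
    using assms(1) by linarith
  show "0 \<le> \<epsilon> * q + (k / \<epsilon>) * p"
    using assms by simp
qed

text \<open>\<open>\<langle>v, (PV + VP)v\<rangle> = 2 Re \<langle>v, PVv\<rangle>\<close>; bound it by Cauchy-Schwarz for the form of \<open>P\<close>
  and then by AM-GM with weight \<open>\<epsilon>\<close>.\<close>
lemma quadratic_anticommutator_le:
  assumes P: "psd P" and V: "self_adjoint V" and \<epsilon>: "0 < \<epsilon>"
  shows "Re (cinner v ((P ** V + V ** P) *v v))
    \<le> \<epsilon> * (norm v)\<^sup>2 + (l1_norm P * l1_norm (V ** V) / \<epsilon>) * Re (cinner v (P *v v))"
proof -
  have aV: "adj V = V" and aP: "adj P = P"
    using V psd_self_adjoint[OF P] by (simp_all add: self_adjoint_def)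
  define z where "z = cinner v (P *v (V *v v))"
  have "cinner v (V *v (P *v v)) = cinner (V *v v) (P *v v)"
    using cinner_adj[of v V "P *v v"] by (simp add: aV)
  also have "\<dots> = cnj (cinner (P *v v) (V *v v))"
    by (simp only: cnj_cinner)
  also have "cinner (P *v v) (V *v v) = z"
    using cinner_adj[of v P "V *v v"] by (simp add: z_def aP)
  finally have "cinner v (V *v (P *v v)) = cnj z" .
  hence "Re (cinner v ((P ** V + V ** P) *v v)) = 2 * Re z"
    by (simp add: z_def matrix_vector_mult_add_rdistrib cinner_add_right flip: matrix_vector_mul_assoc)
  also have "\<dots> \<le> 2 * cmod z"
    by (simp add: complex_Re_le_cmod)
  also have "\<dots> \<le> \<epsilon> * (norm v)\<^sup>2 + (l1_norm P * l1_norm (V ** V) / \<epsilon>) * Re (cinner v (P *v v))"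
  proof (rule two_mult_le_amgm)
    have "(norm (V *v v))\<^sup>2 = Re (cinner v ((V ** V) *v v))"
      by (simp add: cinner_adj[of v V] aV cinner_self flip: matrix_vector_mul_assoc)
    also have "\<dots> \<le> l1_norm (V ** V) * (norm v)\<^sup>2"
      by (rule quadratic_le_l1_norm)
    finally have "Re (cinner (V *v v) (P *v (V *v v))) \<le> l1_norm P * (l1_norm (V ** V) * (norm v)\<^sup>2)"
      using quadratic_le_l1_norm[of "V *v v" P] l1_norm_nonneg[of P]
      by (meson mult_left_mono order_trans)
    hence "Re (cinner v (P *v v)) * Re (cinner (V *v v) (P *v (V *v v)))
        \<le> Re (cinner v (P *v v)) * (l1_norm P * (l1_norm (V ** V) * (norm v)\<^sup>2))"
      by (rule mult_left_mono) (rule psd_quadratic_nonneg[OF P])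
    thus "(cmod z)\<^sup>2 \<le> l1_norm P * l1_norm (V ** V) * Re (cinner v (P *v v)) * (norm v)\<^sup>2"
      using psd_cauchy_schwarz[OF P, of v "V *v v"] by (simp add: z_def algebra_simps)
  qed (use \<epsilon> psd_quadratic_nonneg[OF P] l1_norm_nonneg in \<open>auto intro: mult_nonneg_nonneg\<close>)
  finally show ?thesis .
qed

lemma trace_anticommutator_le:
  assumes P: "psd P" and V: "self_adjoint V" and R: "psd R" and \<epsilon>: "0 < \<epsilon>"
  shows "Re (trace ((P ** V + V ** P) ** R))
    \<le> \<epsilon> * Re (trace R) + (l1_norm P * l1_norm (V ** V) / \<epsilon>) * Re (trace (P ** R))"
proof -
  define k where "k = l1_norm P * l1_norm (V ** V) / \<epsilon>"
  have "Re (trace ((P ** V + V ** P) ** R)) \<le> Re (trace ((\<epsilon> *\<^sub>R mat 1 + k *\<^sub>R P) ** R))"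
    using quadratic_anticommutator_le[OF P V \<epsilon>]
    by (intro trace_mult_psd_mono[OF R])
      (simp add: k_def matrix_vector_mult_add_rdistrib matrix_vector_scaleR cinner_add_right
        cinner_smult_right cinner_self)
  thus ?thesis
    by (simp add: matrix_add_rdistrib trace_add trace_scaleR k_def flip: scalar_matrix_assoc)
qed

section \<open>The Lindblad generator\<close>

definition lindblad_dissipator :: "'n::finite op \<Rightarrow> 'n op \<Rightarrow> 'n op" where
  "lindblad_dissipator A \<rho> = A ** \<rho> ** adj A - (1/2::real) *\<^sub>R (adj A ** A ** \<rho>)
     - (1/2::real) *\<^sub>R (\<rho> ** adj A ** A)"

definition heisenberg_dissipator :: "'n::finite op \<Rightarrow> 'n op \<Rightarrow> 'n op" where
  "heisenberg_dissipator A X = adj A ** X ** A - (1/2::real) *\<^sub>R (adj A ** A ** X)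
     - (1/2::real) *\<^sub>R (X ** adj A ** A)"

lemma lindblad_eq:
  "lindblad H L K \<rho> = cscale (- \<i>) (H ** \<rho> - \<rho> ** H) + (\<Sum>k\<in>{1..K}. lindblad_dissipator (L k) \<rho>)"
  by (simp add: lindblad_def lindblad_dissipator_def)

lemma gen_eq: "gen L K X = (\<Sum>k\<in>{1..K}. heisenberg_dissipator (L k) X)"
  by (simp add: gen_def heisenberg_dissipator_def)

lemma bounded_linear_lindblad: "bounded_linear (lindblad H L K :: 'n::finite op \<Rightarrow> 'n op)"
proof -
  have "linear (lindblad H L K :: 'n op \<Rightarrow> 'n op)"
  proof (rule linearI)
    show "lindblad H L K (A + B) = lindblad H L K A + lindblad H L K B" for A B :: "'n op"
      unfolding lindblad_def
      by (simp add: matrix_add_ldistrib matrix_add_rdistrib cscale_add cscale_diff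
          sum.distrib[symmetric] algebra_simps)
    show "lindblad H L K (r *\<^sub>R A) = r *\<^sub>R lindblad H L K A" for r and A :: "'n op"
      unfolding lindblad_def
      by (simp add: matrix_mult_scaleR_right cscale_scaleR cscale_diff scaleR_sum_right
          scaleR_diff_right scaleR_add_right flip: scalar_matrix_assoc)
  qed
  thus ?thesis by (simp add: linear_conv_bounded_linear)
qed

lemma trace_lindblad_dissipator: "trace (lindblad_dissipator A \<rho>) = 0"
proof -
  have "trace (A ** \<rho> ** adj A) = trace (adj A ** A ** \<rho>)"
    by (rule trace_mult_cycle)
  moreover have "trace (\<rho> ** adj A ** A) = trace (adj A ** A ** \<rho>)"
    by (simp add: trace_mult_cycle[of \<rho> "adj A" A] trace_mult_cycle[of A \<rho> "adj A"])
  ultimately show ?thesis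
    unfolding lindblad_dissipator_def trace_sub trace_scaleR by (simp add: algebra_simps)
qed

lemma trace_lindblad: "trace (lindblad H L K \<rho>) = 0"
  by (simp add: lindblad_eq trace_add trace_cscale trace_sub trace_sum trace_lindblad_dissipator
      trace_mul_sym[of \<rho> H])

lemma trace_mult_lindblad_dissipator:
  "trace (X ** lindblad_dissipator A \<rho>) = trace (heisenberg_dissipator A X ** \<rho>)"
proof -
  have "trace (X ** (A ** \<rho> ** adj A)) = trace (adj A ** X ** A ** \<rho>)"
    using trace_mult_cycle[of "X ** A" \<rho> "adj A"] by (simp add: matrix_mul_assoc)
  moreover have "trace (X ** (\<rho> ** adj A ** A)) = trace (adj A ** A ** X ** \<rho>)"
    using trace_mul_sym[of "X ** \<rho>" "adj A ** A"] by (simp add: matrix_mul_assoc)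
  ultimately show ?thesis
    unfolding lindblad_dissipator_def heisenberg_dissipator_def
    by (simp add: matrix_diff_ldistrib matrix_diff_rdistrib matrix_mult_scaleR_right trace_sub
        trace_scaleR matrix_mul_assoc flip: scalar_matrix_assoc)
qed

lemma trace_mult_lindblad:
  assumes "H ** X = X ** H"
  shows "trace (X ** lindblad H L K \<rho>) = trace (gen L K X ** \<rho>)"
proof -
  have "trace (X ** (\<rho> ** H)) = trace (X ** (H ** \<rho>))"
    using trace_mult_cycle[of X \<rho> H] by (simp add: matrix_mul_assoc assms)
  hence "trace (X ** cscale (- \<i>) (H ** \<rho> - \<rho> ** H)) = 0"
    by (simp add: matrix_mult_cscale_right trace_cscale matrix_diff_ldistrib trace_sub)
  thus ?thesis
    by (simp add: lindblad_eq gen_eq matrix_add_ldistrib matrix_sum_right matrix_sum_left trace_add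
        trace_sum trace_mult_lindblad_dissipator)
qed

lemma adj_lindblad:
  assumes "self_adjoint H"
  shows "adj (lindblad H L K \<rho>) = lindblad H L K (adj \<rho>)"
proof -
  have aH: "adj H = H"
    using assms by (simp add: self_adjoint_def)
  have "adj (cscale (- \<i>) (H ** \<rho> - \<rho> ** H)) = cscale (- \<i>) (H ** adj \<rho> - adj \<rho> ** H)"
    by (simp add: adj_cscale adj_diff adj_matrix_mult aH vec_eq_iff algebra_simps)
  moreover have "adj (lindblad_dissipator A \<rho>) = lindblad_dissipator A (adj \<rho>)" for A
    by (simp add: lindblad_dissipator_def adj_diff adj_scaleR adj_matrix_mult matrix_mul_assoc)
  ultimately show ?thesis
    by (simp add: lindblad_eq adj_add adj_sum)
qed

text \<open>At a kernel vector of \<open>\<eta>\<close> the commutator term and the anticommutator terms vanish; only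
  the positive part \<open>A\<eta>A\<^sup>\<dagger>\<close> of each dissipator contributes.\<close>
lemma lindblad_kernel_quadratic_nonneg:
  assumes "psd \<eta>" "\<eta> *v x = 0"
  shows "0 \<le> Re (cinner x (lindblad H L K \<eta> *v x))"
proof -
  have "adj \<eta> = \<eta>"
    using psd_self_adjoint[OF assms(1)] by (simp add: self_adjoint_def)
  hence z: "cinner x (\<eta> *v y) = 0" for y
    by (simp add: cinner_adj assms(2))
  have "cinner x (cscale (- \<i>) (H ** \<eta> - \<eta> ** H) *v x) = 0"
    by (simp add: matrix_vector_cscale cinner_smult_right matrix_vector_mult_diff_rdistrib
        assms(2) cinner_diff_right z flip: matrix_vector_mul_assoc)
  moreover have "0 \<le> Re (cinner x (lindblad_dissipator A \<eta> *v x))" for A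
  proof -
    have "cinner x ((A ** \<eta> ** adj A) *v x) = cinner (adj A *v x) (\<eta> *v (adj A *v x))"
      by (simp add: cinner_adj flip: matrix_vector_mul_assoc)
    thus ?thesis
      using psd_quadratic_nonneg[OF assms(1), of "adj A *v x"]
      by (simp add: lindblad_dissipator_def matrix_vector_mult_diff_rdistrib matrix_vector_scaleR
          cinner_diff_right cinner_smult_right assms(2) z flip: matrix_vector_mul_assoc)
  qed
  ultimately show ?thesis
    by (simp add: lindblad_eq matrix_vector_mult_add_rdistrib matrix_vector_sum cinner_add_right
        cinner_sum_right Re_sum sum_nonneg)
qed

text \<open>The shifted operator \<open>R + e\<close> is positive with \<open>x\<close> in its kernel.\<close>
lemma lindblad_quadratic_at_contact:
  assumes "self_adjoint R" and nonneg: "\<And>y. norm y = 1 \<Longrightarrow> 0 \<le> Re (cinner y (R *v y)) + e"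
    and x: "norm x = 1" and contact: "Re (cinner x (R *v x)) + e = 0" and "0 \<le> e"
  shows "- e * l1_norm (lindblad H L K (mat 1)) \<le> Re (cinner x (lindblad H L K R *v x))"
proof -
  define \<eta> where "\<eta> = R + e *\<^sub>R mat 1"
  have quadratic_\<eta>: "Re (cinner y (\<eta> *v y)) = Re (cinner y (R *v y)) + e * (norm y)\<^sup>2" for y
    by (simp add: \<eta>_def matrix_vector_mult_add_rdistrib matrix_vector_scaleR cinner_add_right
        cinner_smult_right cinner_self)
  have "psd \<eta>"
  proof (rule psdI)
    show "self_adjoint \<eta>"
      using \<open>self_adjoint R\<close> by (simp add: \<eta>_def self_adjoint_def adj_add adj_scaleR)
    show "0 \<le> Re (cinner y (\<eta> *v y))" for y
      by (rule quadratic_nonneg_of_sphere) (simp add: quadratic_\<eta> nonneg)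
  qed
  moreover have "\<eta> *v x = 0"
    using quadratic_\<eta>[of x] x contact by (intro psd_quadratic_zero_imp_kernel[OF \<open>psd \<eta>\<close>]) simp
  ultimately have "0 \<le> Re (cinner x (lindblad H L K \<eta> *v x))"
    by (rule lindblad_kernel_quadratic_nonneg)
  moreover have "lindblad H L K R = lindblad H L K \<eta> - e *\<^sub>R lindblad H L K (mat 1)"
    using bounded_linear_lindblad[of H L K]
    by (simp add: \<eta>_def linear_add linear_scale bounded_linear.linear)
  moreover have "e * Re (cinner x (lindblad H L K (mat 1) *v x)) \<le> e * l1_norm (lindblad H L K (mat 1))"
    using quadratic_le_l1_norm[of x] x \<open>0 \<le> e\<close> by (simp add: mult_left_mono)
  ultimately show ?thesis
    by (simp add: matrix_vector_mult_diff_rdistrib matrix_vector_scaleR cinner_diff_right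
        cinner_smult_right)
qed

lemma gen_square_self_adjoint:
  assumes "self_adjoint V"
  shows "gen L K (V ** V) = dissip L K V + (gen L K V ** V + V ** gen L K V)"
  using assms by (simp add: dissip_def self_adjoint_def)

text \<open>The key estimate behind condition DS: the dissipation \<open>\<DD>(V) \<ge> cV\<close> bounds
  \<open>tr(\<G>(V\<^sup>2)R)\<close> from below, up to the cross term \<open>\<G>(V)V + V\<G>(V)\<close>, which is absorbed by a
  multiple of \<open>tr(\<G>(V)R) \<le> 0\<close>.\<close>
lemma trace_gen_square_ge:
  assumes V: "self_adjoint V" and G: "loewner_le (gen L K V) 0"
    and DS: "loewner_le (c *\<^sub>R V) (dissip L K V)" and R: "psd R" "trace R = 1" and "0 < \<epsilon>"
  shows "c * Re (trace (V ** R)) - \<epsilon>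
      + l1_norm (gen L K V) * l1_norm (V ** V) / \<epsilon> * Re (trace (gen L K V ** R))
    \<le> Re (trace (gen L K (V ** V) ** R))"
proof -
  define P where "P = - gen L K V"
  have "psd P"
    using G by (simp add: P_def loewner_le_def)
  have "c * Re (trace (V ** R)) \<le> Re (trace (dissip L K V ** R))"
    using loewner_le_trace_mono[OF DS R(1)] by (simp add: trace_scaleR flip: scalar_matrix_assoc)
  moreover have "Re (trace ((P ** V + V ** P) ** R))
      \<le> \<epsilon> + l1_norm P * l1_norm (V ** V) / \<epsilon> * Re (trace (P ** R))"
    using trace_anticommutator_le[OF \<open>psd P\<close> V R(1) \<open>0 < \<epsilon>\<close>] R(2) by simp
  ultimately show ?thesis
    by (simp add: P_def gen_square_self_adjoint[OF V] l1_norm_uminus matrix_add_rdistrib matrix_diff_rdistrib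
        matrix_neg_left matrix_neg_right trace_add trace_sub trace_neg)
qed

section \<open>Differential inequalities on \<open>[0, \<infinity>)\<close>\<close>

lemma has_vector_derivative_at_of_within_nonneg:
  assumes "0 < t" "(f has_vector_derivative D) (at t within {0..})"
  shows "(f has_vector_derivative D) (at t)"
proof -
  have "(f has_vector_derivative D) (at t within {0<..})"
    by (rule has_vector_derivative_within_subset[OF assms(2)]) auto
  thus ?thesis
    using assms(1) has_vector_derivative_within_open[of t "{0<..}" f D] by simp
qed

lemma has_real_derivative_at_of_within_nonneg:
  "0 < t \<Longrightarrow> (f has_real_derivative D) (at t within {0..}) \<Longrightarrow> (f has_real_derivative D) (at t)"
  using has_vector_derivative_at_of_within_nonneg has_real_derivative_iff_has_vector_derivative by blast

lemma continuous_on_nonneg_of_has_vector_derivative: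
  assumes "\<And>t. 0 \<le> t \<Longrightarrow> (f has_vector_derivative D t) (at t within {0..})"
  shows "continuous_on {0..} f"
  using assms has_vector_derivative_continuous continuous_on_eq_continuous_within
  by (metis atLeast_iff)

lemma deriv_nonneg_imp_increasing_nonneg:
  fixes f :: "real \<Rightarrow> real"
  assumes deriv: "\<And>t. 0 \<le> t \<Longrightarrow> (f has_real_derivative f' t) (at t within {0..})"
    and nonneg: "\<And>t. 0 < t \<Longrightarrow> 0 \<le> f' t"
    and "0 \<le> a" "a \<le> b"
  shows "f a \<le> f b"
proof (rule DERIV_nonneg_imp_increasing_open[OF \<open>a \<le> b\<close>])
  show "\<exists>y. DERIV f x :> y \<and> 0 \<le> y" if "a < x" for x
  proof -
    have "0 < x" using that \<open>0 \<le> a\<close> by linarith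
    thus ?thesis
      using has_real_derivative_at_of_within_nonneg[OF _ deriv] nonneg by fastforce
  qed
  have "continuous_on {0..} f"
    by (rule continuous_on_nonneg_of_has_vector_derivative)
      (use deriv in \<open>simp add: has_real_derivative_iff_has_vector_derivative\<close>)
  thus "continuous_on {a..b} f"
    by (rule continuous_on_subset) (use \<open>0 \<le> a\<close> in auto)
qed

lemma deriv_nonpos_imp_decreasing_nonneg:
  fixes f :: "real \<Rightarrow> real"
  assumes "\<And>t. 0 \<le> t \<Longrightarrow> (f has_real_derivative f' t) (at t within {0..})"
    and "\<And>t. 0 \<le> t \<Longrightarrow> f' t \<le> 0" and "0 \<le> a" "a \<le> b"
  shows "f b \<le> f a"
proof -
  have "- f a \<le> - f b"
  proof (rule deriv_nonneg_imp_increasing_nonneg[of "\<lambda>t. - f t" "\<lambda>t. - f' t" a b])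
    show "((\<lambda>t. - f t) has_real_derivative - f' t) (at t within {0..})" if "0 \<le> t" for t
      by (intro DERIV_minus assms(1) that)
  qed (use assms in auto)
  thus ?thesis by simp
qed

lemma deriv_le_neg_imp_unbounded_below:
  fixes \<phi> :: "real \<Rightarrow> real"
  assumes deriv: "\<And>t. 0 \<le> t \<Longrightarrow> (\<phi> has_real_derivative \<phi>' t) (at t within {0..})"
    and slope: "\<And>t. 0 \<le> t \<Longrightarrow> \<phi>' t \<le> - a" and "0 < a"
  shows "\<exists>t\<ge>0. \<phi> t < b"
proof -
  define T where "T = \<bar>\<phi> 0 - b\<bar> / a + 1"
  have T: "0 \<le> T"
    using \<open>0 < a\<close> by (simp add: T_def)
  have "\<phi> T + a * T \<le> \<phi> 0 + a * 0"
  proof (rule deriv_nonpos_imp_decreasing_nonneg[of "\<lambda>t. \<phi> t + a * t" "\<lambda>t. \<phi>' t + a" 0 T])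
    show "((\<lambda>t. \<phi> t + a * t) has_real_derivative \<phi>' t + a) (at t within {0..})" if "0 \<le> t" for t
      using deriv[OF that] by (auto intro!: derivative_eq_intros)
    show "\<phi>' t + a \<le> 0" if "0 \<le> t" for t
      using slope[OF that] by simp
  qed (use T in auto)
  moreover have "a * T = \<bar>\<phi> 0 - b\<bar> + a"
    using \<open>0 < a\<close> by (simp add: T_def field_simps)
  ultimately show ?thesis
    using T \<open>0 < a\<close> abs_ge_self[of "\<phi> 0 - b"] by (intro exI[of _ T]) linarith
qed

text \<open>Uniqueness for linear equations, via the Gronwall bound \<open>(|D|\<^sup>2)' \<le> 2B|D|\<^sup>2\<close>.\<close>
lemma linear_ode_zero_initial:
  fixes D :: "real \<Rightarrow> 'a::real_inner"
  assumes lin: "bounded_linear f"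
    and ode: "\<And>t. 0 \<le> t \<Longrightarrow> (D has_vector_derivative f (D t)) (at t within {0..})"
    and "D 0 = 0" "0 \<le> t"
  shows "D t = 0"
proof -
  obtain B where B: "\<And>x. norm (f x) \<le> norm x * B" and "0 \<le> B"
    using bounded_linear.nonneg_bounded[OF lin] by blast
  define \<phi> where "\<phi> s = exp (- (2*B) * s) * inner (D s) (D s)" for s
  have "\<phi> t \<le> \<phi> 0"
  proof (rule deriv_nonpos_imp_decreasing_nonneg[OF _ _ order_refl \<open>0 \<le> t\<close>])
    fix s :: real assume "0 \<le> s"
    have "((\<lambda>s. inner (D s) (D s)) has_real_derivative 2 * inner (D s) (f (D s))) (at s within {0..})"
      using bounded_bilinear.has_vector_derivative[OF bounded_bilinear_inner ode ode, OF \<open>0 \<le> s\<close> \<open>0 \<le> s\<close>]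
      by (simp add: has_real_derivative_iff_has_vector_derivative inner_commute)
    thus "(\<phi> has_real_derivative exp (- (2*B) * s) * (2 * inner (D s) (f (D s)) - 2 * B * inner (D s) (D s)))
        (at s within {0..})"
      unfolding \<phi>_def by (auto intro!: derivative_eq_intros simp: algebra_simps)
    have "inner (D s) (f (D s)) \<le> norm (D s) * (norm (D s) * B)"
      by (rule order_trans[OF norm_cauchy_schwarz mult_left_mono[OF B]]) simp
    thus "exp (- (2*B) * s) * (2 * inner (D s) (f (D s)) - 2 * B * inner (D s) (D s)) \<le> 0"
      by (simp add: mult_nonneg_nonpos power2_norm_eq_inner[symmetric] power2_eq_square algebra_simps)
  qed
  hence "inner (D t) (D t) \<le> 0"
    using \<open>D 0 = 0\<close> by (simp add: \<phi>_def mult_le_0_iff)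
  hence "inner (D t) (D t) = 0"
    using inner_ge_zero[of "D t"] by linarith
  thus ?thesis by simp
qed

lemma first_nonpositive_time:
  fixes F :: "real \<Rightarrow> 'a::metric_space \<Rightarrow> real"
  assumes "compact S" and cont: "continuous_on ({0..} \<times> S) (\<lambda>p. F (fst p) (snd p))"
    and "0 \<le> t" "x \<in> S" "F t x \<le> 0"
  obtains t0 x0 where "0 \<le> t0" "t0 \<le> t" "x0 \<in> S" "F t0 x0 \<le> 0"
    and "\<And>u y. 0 \<le> u \<Longrightarrow> u < t0 \<Longrightarrow> y \<in> S \<Longrightarrow> 0 < F u y"
proof -
  define bad where "bad = {p \<in> {0..t} \<times> S. F (fst p) (snd p) \<le> 0}"
  have "compact ({0..t} \<times> S)"
    using \<open>compact S\<close> by (intro compact_Times compact_Icc)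
  moreover have "closed bad"
    unfolding bad_def
    by (rule continuous_on_closed_Collect_le[OF continuous_on_subset[OF cont] continuous_on_const])
      (use \<open>compact ({0..t} \<times> S)\<close> in \<open>auto intro: compact_imp_closed\<close>)
  moreover have "bad \<subseteq> {0..t} \<times> S"
    by (auto simp: bad_def)
  ultimately have "compact bad"
    using compact_Int_closed Int_absorb1 by metis
  hence "compact (fst ` bad)"
    by (intro compact_continuous_image continuous_on_fst continuous_on_id)
  moreover have "(t, x) \<in> bad"
    using assms by (simp add: bad_def)
  ultimately obtain t0 where "t0 \<in> fst ` bad" and min: "\<And>u. u \<in> fst ` bad \<Longrightarrow> t0 \<le> u"
    using compact_attains_inf[of "fst ` bad"] by blast
  then obtain x0 where bad0: "(t0, x0) \<in> bad" by force
  have "0 < F u y" if "0 \<le> u" "u < t0" "y \<in> S" for u y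
  proof (rule ccontr)
    assume "\<not> 0 < F u y"
    hence "u \<in> fst ` bad"
      using that bad0 by (force simp: bad_def)
    thus False
      using min[of u] \<open>u < t0\<close> by simp
  qed
  with bad0 show ?thesis
    by (intro that[of t0 x0]) (auto simp: bad_def)
qed

lemma positivity_invariance:
  fixes F :: "real \<Rightarrow> 'a::metric_space \<Rightarrow> real"
  assumes "compact S" and cont: "continuous_on ({0..} \<times> S) (\<lambda>p. F (fst p) (snd p))"
    and init: "\<And>x. x \<in> S \<Longrightarrow> 0 < F 0 x"
    and deriv: "\<And>t x. 0 < t \<Longrightarrow> x \<in> S \<Longrightarrow> ((\<lambda>s. F s x) has_real_derivative F' t x) (at t)"
    and contact: "\<And>t x. 0 < t \<Longrightarrow> x \<in> S \<Longrightarrow> (\<And>y. y \<in> S \<Longrightarrow> 0 \<le> F t y) \<Longrightarrow> F t x = 0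
      \<Longrightarrow> 0 < F' t x"
    and "0 \<le> t" "x \<in> S"
  shows "0 < F t x"
proof (rule ccontr)
  assume "\<not> 0 < F t x"
  hence "F t x \<le> 0" by simp
  then obtain t0 x0 where "0 \<le> t0" "t0 \<le> t" "x0 \<in> S" "F t0 x0 \<le> 0"
    and before: "\<And>u y. 0 \<le> u \<Longrightarrow> u < t0 \<Longrightarrow> y \<in> S \<Longrightarrow> 0 < F u y"
    using first_nonpositive_time[OF \<open>compact S\<close> cont \<open>0 \<le> t\<close> \<open>x \<in> S\<close>] by blast
  have "t0 \<noteq> 0"
    using init[OF \<open>x0 \<in> S\<close>] \<open>F t0 x0 \<le> 0\<close> by auto
  hence "0 < t0"
    using \<open>0 \<le> t0\<close> by simp
  have at_t0: "0 \<le> F t0 y" if "y \<in> S" for y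
  proof (rule tendsto_lowerbound)
    show "((\<lambda>s. F s y) \<longlongrightarrow> F t0 y) (at_left t0)"
      using DERIV_isCont[OF deriv[OF \<open>0 < t0\<close> that]] by (simp add: isCont_def filterlim_at_split)
    show "\<forall>\<^sub>F s in at_left t0. 0 \<le> F s y"
      using eventually_at_left_real[OF \<open>0 < t0\<close>]
      by eventually_elim (use before that in \<open>auto intro: less_imp_le\<close>)
  qed simp
  hence "F t0 x0 = 0"
    using \<open>F t0 x0 \<le> 0\<close> \<open>x0 \<in> S\<close> by (simp add: order_antisym)
  have "0 < F' t0 x0"
    by (rule contact[OF \<open>0 < t0\<close> \<open>x0 \<in> S\<close> at_t0 \<open>F t0 x0 = 0\<close>])
  then obtain d where "0 < d" and dec: "\<And>h. 0 < h \<Longrightarrow> h < d \<Longrightarrow> F (t0 - h) x0 < F t0 x0"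
    using DERIV_pos_inc_left[OF deriv[OF \<open>0 < t0\<close> \<open>x0 \<in> S\<close>]] by blast
  define h where "h = min d t0 / 2"
  have "F (t0 - h) x0 < 0"
    using dec[of h] \<open>0 < d\<close> \<open>0 < t0\<close> \<open>F t0 x0 = 0\<close> by (simp add: h_def)
  moreover have "0 < F (t0 - h) x0"
    using before[of "t0 - h" x0] \<open>0 < d\<close> \<open>0 < t0\<close> \<open>x0 \<in> S\<close> by (simp add: h_def)
  ultimately show False by simp
qed

section \<open>Solutions of the Lindblad equation\<close>

locale lindblad_solution =
  fixes H :: "'n::finite op" and L :: "nat \<Rightarrow> 'n op" and K :: nat and \<rho> :: "real \<Rightarrow> 'n op"
  assumes H_self_adjoint: "self_adjoint H"
    and init: "density_state (\<rho> 0)"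
    and ode: "\<And>t. 0 \<le> t \<Longrightarrow> (\<rho> has_vector_derivative lindblad H L K (\<rho> t)) (at t within {0..})"
begin

lemma trace_mult_has_real_derivative:
  "0 \<le> t \<Longrightarrow> ((\<lambda>t. Re (trace (X ** \<rho> t))) has_real_derivative Re (trace (X ** lindblad H L K (\<rho> t))))
    (at t within {0..})"
  using bounded_linear.has_vector_derivative[OF bounded_linear_Re_trace_mult ode]
  by (simp add: has_real_derivative_iff_has_vector_derivative)

lemma trace_eq_1: "0 \<le> t \<Longrightarrow> trace (\<rho> t) = 1"
proof -
  have "\<exists>c. \<forall>t\<in>{0..}. trace (\<rho> t) = c"
  proof (rule has_derivative_zero_constant)
    fix t :: real assume "t \<in> {0..}"
    thus "((\<lambda>t. trace (\<rho> t)) has_derivative (\<lambda>h. 0)) (at t within {0..})"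
      using bounded_linear.has_vector_derivative[OF bounded_linear_trace ode, of t]
      by (simp add: trace_lindblad has_vector_derivative_def)
  qed (rule convex_real_interval)
  thus "0 \<le> t \<Longrightarrow> trace (\<rho> t) = 1"
    using init by (force simp: density_state_def)
qed

lemma self_adjoint: "0 \<le> t \<Longrightarrow> self_adjoint (\<rho> t)"
proof -
  have "\<rho> t - adj (\<rho> t) = 0" if "0 \<le> t" for t
  proof (rule linear_ode_zero_initial[OF bounded_linear_lindblad _ _ that])
    show "((\<lambda>t. \<rho> t - adj (\<rho> t)) has_vector_derivative lindblad H L K (\<rho> s - adj (\<rho> s)))
        (at s within {0..})" if "0 \<le> s" for s
      using has_vector_derivative_diff[OF ode bounded_linear.has_vector_derivative[OF bounded_linear_adj ode],
          OF that that]
      by (simp add: adj_lindblad[OF H_self_adjoint] linear_diff bounded_linear.linear[OF bounded_linear_lindblad])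
    show "\<rho> 0 - adj (\<rho> 0) = 0"
      using init by (simp add: density_state_def psd_def self_adjoint_def)
  qed
  thus "0 \<le> t \<Longrightarrow> self_adjoint (\<rho> t)"
    by (simp add: self_adjoint_def)
qed

lemma continuous_on_quadratic_form:
  "continuous_on ({0..} \<times> S) (\<lambda>p. Re (cinner (snd p) (\<rho> (fst p) *v snd p)))"
proof -
  have "continuous_on {0..} \<rho>"
    using ode by (rule continuous_on_nonneg_of_has_vector_derivative)
  hence "continuous_on ({0..} \<times> S) (\<lambda>p. \<rho> (fst p))"
    by (rule continuous_on_compose2) (auto intro: continuous_intros)
  thus ?thesis
    unfolding cinner_expand by (intro continuous_intros)
qed

text \<open>The exponential weight grows fast enough to absorb the error
  \<open>-e * l1_norm (lindblad H L K (mat 1))\<close> of \<open>lindblad_quadratic_at_contact\<close>.\<close>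
lemma quadratic_form_plus_exp_pos:
  assumes "0 < \<epsilon>" "0 \<le> t" "norm x = 1"
  shows "0 < Re (cinner x (\<rho> t *v x)) + \<epsilon> * exp ((l1_norm (lindblad H L K (mat 1)) + 1) * t)"
proof -
  define M where "M = lindblad H L K (mat 1)"
  define rate where "rate = l1_norm M + 1"
  have "0 < Re (cinner x (\<rho> t *v x)) + \<epsilon> * exp (rate * t)"
  proof (rule positivity_invariance[where F = "\<lambda>t x. Re (cinner x (\<rho> t *v x)) + \<epsilon> * exp (rate * t)"
        and S = "sphere 0 1"])
    show "continuous_on ({0..} \<times> sphere 0 1)
        (\<lambda>p. Re (cinner (snd p) (\<rho> (fst p) *v snd p)) + \<epsilon> * exp (rate * fst p))"
      by (intro continuous_intros continuous_on_quadratic_form)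
    show "0 < Re (cinner x (\<rho> 0 *v x)) + \<epsilon> * exp (rate * 0)" for x
      using init \<open>0 < \<epsilon>\<close> by (simp add: density_state_def psd_def add_nonneg_pos)
    show "((\<lambda>s. Re (cinner x (\<rho> s *v x)) + \<epsilon> * exp (rate * s)) has_real_derivative
        Re (cinner x (lindblad H L K (\<rho> s) *v x)) + \<epsilon> * (exp (rate * s) * rate)) (at s)" if "0 < s" for s x
    proof (rule DERIV_add)
      show "((\<lambda>s. Re (cinner x (\<rho> s *v x))) has_real_derivative Re (cinner x (lindblad H L K (\<rho> s) *v x)))
          (at s)"
        using has_real_derivative_at_of_within_nonneg[OF that trace_mult_has_real_derivative[of s "outer x"]]
          that by (simp add: trace_outer_mult)
    qed (auto intro!: derivative_eq_intros)
    show "0 < Re (cinner x (lindblad H L K (\<rho> s) *v x)) + \<epsilon> * (exp (rate * s) * rate)"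
      if "0 < s" and x: "x \<in> sphere 0 1"
        and nonneg: "\<And>y. y \<in> sphere 0 1 \<Longrightarrow> 0 \<le> Re (cinner y (\<rho> s *v y)) + \<epsilon> * exp (rate * s)"
        and contact: "Re (cinner x (\<rho> s *v x)) + \<epsilon> * exp (rate * s) = 0" for s x
    proof -
      have "0 < \<epsilon> * exp (rate * s)"
        using \<open>0 < \<epsilon>\<close> by simp
      moreover have "- (\<epsilon> * exp (rate * s)) * l1_norm M \<le> Re (cinner x (lindblad H L K (\<rho> s) *v x))"
        unfolding M_def
      proof (rule lindblad_quadratic_at_contact)
        show "0 \<le> Re (cinner y (\<rho> s *v y)) + \<epsilon> * exp (rate * s)" if "norm y = 1" for y
          using nonneg that by simp
      qed (use self_adjoint contact \<open>0 < s\<close> x \<open>0 < \<epsilon> * exp (rate * s)\<close> in simp_all)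
      ultimately show ?thesis
        by (simp add: rate_def algebra_simps)
    qed
  qed (use assms in auto)
  thus ?thesis
    by (simp add: rate_def M_def)
qed

lemma psd:
  assumes "0 \<le> t"
  shows "psd (\<rho> t)"
proof (rule psdI)
  show "self_adjoint (\<rho> t)"
    using assms by (rule self_adjoint)
  define rate where "rate = l1_norm (lindblad H L K (mat 1)) + 1"
  have "0 \<le> Re (cinner x (\<rho> t *v x))" if "norm x = 1" for x
  proof (rule ccontr)
    assume neg: "\<not> 0 \<le> Re (cinner x (\<rho> t *v x))"
    define \<epsilon> where "\<epsilon> = - Re (cinner x (\<rho> t *v x)) / (2 * exp (rate * t))"
    have "0 < \<epsilon>"
      using neg by (simp add: \<epsilon>_def divide_neg_pos)
    have "\<epsilon> * exp (rate * t) = - Re (cinner x (\<rho> t *v x)) / 2"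
      by (simp add: \<epsilon>_def)
    thus False
      using quadratic_form_plus_exp_pos[OF \<open>0 < \<epsilon>\<close> assms that] neg by (simp add: rate_def)
  qed
  thus "0 \<le> Re (cinner y (\<rho> t *v y))" for y
    by (rule quadratic_nonneg_of_sphere)
qed

lemma density_state: "0 \<le> t \<Longrightarrow> density_state (\<rho> t)"
  by (simp add: density_state_def psd trace_eq_1)

lemma trace_mult_commuting_has_real_derivative:
  assumes "H ** X = X ** H" "0 \<le> t"
  shows "((\<lambda>t. Re (trace (X ** \<rho> t))) has_real_derivative Re (trace (gen L K X ** \<rho> t)))
    (at t within {0..})"
  using trace_mult_has_real_derivative[OF assms(2), of X] by (simp add: trace_mult_lindblad[OF assms(1)])

lemma lyapunov_trace_decreasing:
  assumes "H ** V = V ** H" "loewner_le (gen L K V) 0" "0 \<le> a" "a \<le> b"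
  shows "Re (trace (V ** \<rho> b)) \<le> Re (trace (V ** \<rho> a))"
proof (rule deriv_nonpos_imp_decreasing_nonneg[OF trace_mult_commuting_has_real_derivative[OF assms(1)]])
  show "Re (trace (gen L K V ** \<rho> t)) \<le> 0" if "0 \<le> t" for t
    using loewner_le_trace_mono[OF assms(2) psd[OF that]] by simp
qed (use assms in auto)

lemma lyapunov_trace_tendsto_zero:
  assumes "H ** V = V ** H" "psd V" "loewner_le (gen L K V) 0"
    and small: "\<And>\<delta>. 0 < \<delta> \<Longrightarrow> \<exists>T\<ge>0. Re (trace (V ** \<rho> T)) < \<delta>"
  shows "((\<lambda>t. Re (trace (V ** \<rho> t))) \<longlongrightarrow> 0) at_top"
proof (rule tendstoI)
  fix \<delta> :: real assume "0 < \<delta>"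
  then obtain T where "0 \<le> T" "Re (trace (V ** \<rho> T)) < \<delta>"
    using small by blast
  show "\<forall>\<^sub>F t in at_top. dist (Re (trace (V ** \<rho> t))) 0 < \<delta>"
    using eventually_ge_at_top[of T]
  proof eventually_elim
    case (elim t)
    have "0 \<le> Re (trace (V ** \<rho> t))"
      using \<open>0 \<le> T\<close> elim by (intro trace_mult_psd_nonneg[OF \<open>psd V\<close> psd]) simp
    moreover have "Re (trace (V ** \<rho> t)) \<le> Re (trace (V ** \<rho> T))"
      using lyapunov_trace_decreasing[OF assms(1,3) \<open>0 \<le> T\<close> elim] .
    ultimately show ?case
      using \<open>Re (trace (V ** \<rho> T)) < \<delta>\<close> by simp
  qed
qed

lemma lyapunov_trace_small_of_exponential:
  assumes comm: "H ** V = V ** H" and "0 < c" and ES: "loewner_le (gen L K V) (- (c *\<^sub>R V))"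
    and "0 < \<delta>"
  shows "\<exists>T\<ge>0. Re (trace (V ** \<rho> T)) < \<delta>"
proof (cases "\<forall>t\<ge>0. \<delta> \<le> Re (trace (V ** \<rho> t))")
  case True
  show ?thesis
  proof (rule deriv_le_neg_imp_unbounded_below[OF trace_mult_commuting_has_real_derivative[OF comm]])
    show "Re (trace (gen L K V ** \<rho> t)) \<le> - (c * \<delta>)" if "0 \<le> t" for t
    proof -
      have "Re (trace (gen L K V ** \<rho> t)) \<le> - c * Re (trace (V ** \<rho> t))"
        using loewner_le_trace_mono[OF ES psd[OF that]]
        by (simp add: matrix_neg_left trace_neg trace_scaleR flip: scalar_matrix_assoc)
      moreover have "c * \<delta> \<le> c * Re (trace (V ** \<rho> t))"
        using True that \<open>0 < c\<close> by simp
      ultimately show ?thesis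
        by simp
    qed
  qed (use \<open>0 < c\<close> \<open>0 < \<delta>\<close> in simp_all)
qed (auto simp: not_le)

lemma lyapunov_trace_small_of_dissipation:
  assumes comm: "H ** V = V ** H" and "psd V" and G: "loewner_le (gen L K V) 0"
    and "0 < c" and DS: "loewner_le (c *\<^sub>R V) (dissip L K V)" and "0 < \<delta>"
  shows "\<exists>T\<ge>0. Re (trace (V ** \<rho> T)) < \<delta>"
proof (rule ccontr)
  assume "\<not> ?thesis"
  hence large: "\<delta> \<le> Re (trace (V ** \<rho> t))" if "0 \<le> t" for t
    using that by (meson not_less)
  define \<epsilon> where "\<epsilon> = c * \<delta> / 2"
  define A where "A = l1_norm (gen L K V) * l1_norm (V ** V) / \<epsilon>"
  have "0 < \<epsilon>" and "0 \<le> A"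
    using \<open>0 < c\<close> \<open>0 < \<delta>\<close> by (simp_all add: \<epsilon>_def A_def l1_norm_nonneg)
  have comm2: "H ** (V ** V) = (V ** V) ** H"
    by (metis comm matrix_mul_assoc)
  text \<open>\<open>A tr(V\<rho>) - tr(V\<^sup>2\<rho>)\<close> decreases at rate \<open>\<epsilon>\<close> but is bounded below.\<close>
  have "\<exists>t\<ge>0. A * Re (trace (V ** \<rho> t)) - Re (trace ((V ** V) ** \<rho> t)) < - l1_norm (V ** V)"
  proof (rule deriv_le_neg_imp_unbounded_below)
    show "((\<lambda>t. A * Re (trace (V ** \<rho> t)) - Re (trace ((V ** V) ** \<rho> t))) has_real_derivative
        A * Re (trace (gen L K V ** \<rho> t)) - Re (trace (gen L K (V ** V) ** \<rho> t))) (at t within {0..})"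
      if "0 \<le> t" for t
      by (intro DERIV_diff DERIV_cmult trace_mult_commuting_has_real_derivative comm comm2 that)
    show "A * Re (trace (gen L K V ** \<rho> t)) - Re (trace (gen L K (V ** V) ** \<rho> t)) \<le> - \<epsilon>"
      if "0 \<le> t" for t
    proof -
      have "c * Re (trace (V ** \<rho> t)) - \<epsilon> + A * Re (trace (gen L K V ** \<rho> t))
          \<le> Re (trace (gen L K (V ** V) ** \<rho> t))"
        unfolding A_def
        by (rule trace_gen_square_ge[OF psd_self_adjoint[OF \<open>psd V\<close>] G DS psd[OF that] trace_eq_1[OF that]
            \<open>0 < \<epsilon>\<close>])
      moreover have "c * \<delta> \<le> c * Re (trace (V ** \<rho> t))"
        using large[OF that] \<open>0 < c\<close> by simp
      ultimately show ?thesis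
        by (simp add: \<epsilon>_def)
    qed
  qed (use \<open>0 < \<epsilon>\<close> in simp)
  moreover have "- l1_norm (V ** V) \<le> A * Re (trace (V ** \<rho> t)) - Re (trace ((V ** V) ** \<rho> t))"
    if "0 \<le> t" for t
    using trace_mult_psd_le_l1_norm[OF psd[OF that], of "V ** V"] trace_eq_1[OF that]
      mult_nonneg_nonneg[OF \<open>0 \<le> A\<close> trace_mult_psd_nonneg[OF \<open>psd V\<close> psd[OF that]]]
    by simp
  ultimately show False
    by (meson not_less)
qed

end

section \<open>Limits of states\<close>

lemma state_conv_entry:
  assumes "state_conv r \<sigma>"
  shows "((\<lambda>m. r m $ i $ j) \<longlongrightarrow> \<sigma> $ i $ j) sequentially"
  using assms[unfolded state_conv_def, rule_format, of "\<chi> a b. if a = j \<and> b = i then 1 else 0"]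
  by (simp add: trace_mult_matrix_unit)

lemma density_state_of_state_conv:
  assumes conv: "state_conv r \<sigma>" and states: "\<forall>\<^sub>F m in sequentially. density_state (r m)"
  shows "density_state \<sigma>"
proof -
  have "self_adjoint \<sigma>"
  proof -
    have "((\<lambda>m. cnj (r m $ j $ i)) \<longlongrightarrow> \<sigma> $ i $ j) sequentially" for i j
      using state_conv_entry[OF conv, of i j] states
      by (rule Lim_transform_eventually[OF _ eventually_mono])
        (simp add: density_state_def self_adjoint_entry psd_self_adjoint)
    hence "cnj (\<sigma> $ j $ i) = \<sigma> $ i $ j" for i j
      by (rule LIMSEQ_unique[OF tendsto_cnj[OF state_conv_entry[OF conv, of j i]]])
    thus ?thesis
      by (simp add: self_adjoint_def vec_eq_iff)
  qed
  moreover have "0 \<le> Re (cinner x (\<sigma> *v x))" for x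
  proof (rule tendsto_lowerbound)
    show "((\<lambda>m. Re (cinner x (r m *v x))) \<longlongrightarrow> Re (cinner x (\<sigma> *v x))) sequentially"
      using tendsto_Re[OF conv[unfolded state_conv_def, rule_format, of "outer x"]]
      by (simp add: trace_mult_outer)
    show "\<forall>\<^sub>F m in sequentially. 0 \<le> Re (cinner x (r m *v x))"
      using states by eventually_elim (simp add: density_state_def psd_quadratic_nonneg)
  qed simp
  moreover have "trace \<sigma> = 1"
  proof (rule tendsto_unique[OF _ _ tendsto_eventually])
    show "((\<lambda>m. trace (r m)) \<longlongrightarrow> trace \<sigma>) sequentially"
      using conv[unfolded state_conv_def, rule_format, of "mat 1"] by simp
    show "\<forall>\<^sub>F m in sequentially. trace (r m) = 1"
      using states by eventually_elim (simp add: density_state_def)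
  qed simp
  ultimately show ?thesis
    by (simp add: density_state_def psdI)
qed

theorem theorem13:
  fixes H V :: "'n::finite op" and L :: "nat \<Rightarrow> 'n op" and K :: nat
    and \<rho> :: "real \<Rightarrow> 'n op"
  assumes H_sa: "self_adjoint H"
    and lyap: "lyapunov_op L K V"
    and comm: "H ** V = V ** H"
    and cond: "(\<exists>c>0. loewner_le (gen L K V) (- (c *\<^sub>R V)))
             \<or> (loewner_le (gen L K V) 0 \<and> (\<exists>c>0. loewner_le (c *\<^sub>R V) (dissip L K V)))"
    and init: "density_state (\<rho> 0)"
    and ode: "\<And>t. t \<ge> 0 \<Longrightarrow> (\<rho> has_vector_derivative lindblad H L K (\<rho> t)) (at t within {0..})"
  shows "\<forall>\<sigma> s. filterlim s at_top sequentially \<and> state_conv (\<lambda>m. \<rho> (s m)) \<sigma>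
            \<longrightarrow> \<sigma> \<in> Z_set V"
proof (intro allI impI, elim conjE)
  fix \<sigma> and s :: "nat \<Rightarrow> real"
  assume s: "filterlim s at_top sequentially" and conv: "state_conv (\<lambda>m. \<rho> (s m)) \<sigma>"
  interpret lindblad_solution H L K \<rho>
    using H_sa init ode by unfold_locales
  have V: "psd V" "loewner_le (gen L K V) 0"
    using lyap by (simp_all add: lyapunov_op_def)
  have "((\<lambda>t. Re (trace (V ** \<rho> t))) \<longlongrightarrow> 0) at_top"
    using cond lyapunov_trace_small_of_exponential[OF comm] lyapunov_trace_small_of_dissipation[OF comm V(1)]
    by (intro lyapunov_trace_tendsto_zero[OF comm V]) blast
  hence "((\<lambda>m. Re (trace (V ** \<rho> (s m)))) \<longlongrightarrow> 0) sequentially"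
    using s by (rule filterlim_compose)
  moreover have "((\<lambda>m. Re (trace (V ** \<rho> (s m)))) \<longlongrightarrow> Re (trace (V ** \<sigma>))) sequentially"
    using tendsto_Re[OF conv[unfolded state_conv_def, rule_format, of V]] by (simp add: trace_mul_sym[of V])
  ultimately have "Re (trace (V ** \<sigma>)) = 0"
    by (rule LIMSEQ_unique[rotated])
  moreover have "\<forall>\<^sub>F m in sequentially. density_state (\<rho> (s m))"
    using s[unfolded filterlim_at_top, rule_format, of 0] by eventually_elim (rule density_state)
  hence "density_state \<sigma>"
    by (rule density_state_of_state_conv[OF conv])
  moreover have "Im (trace (V ** \<sigma>)) = 0"
    using \<open>density_state \<sigma>\<close> psd_self_adjoint[OF V(1)] by (simp add: density_state_def trace_mult_psd_real)
  ultimately show "\<sigma> \<in> Z_set V"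
    by (simp add: Z_set_def complex_eq_iff)
qed

end
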